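(* Let $\mathcal{C}\subseteq(\mathbb{C}^a)^{\otimes n}$ be a quantum code of block length $n$ and dimension $k>0$. Suppose that for some $i\in[n]$ there exist subsets $I_i^1,I_i^2\subseteq[n]$ with $I_i^1\cap I_i^2=\{i\}$ such that for each $b\in\{1,2\}$ there is a quantum channel $\mathrm{Rec}_i^b:\mathcal{M}(I_i^b\setminus\{i\})\to\mathcal{M}(I_i^b)$ with \[ (\mathrm{Rec}_i^b\otimes \mathrm{id}_{[n]\setminus I_i^b})(\psi_{[n]\setminus\{i\}})=\psi \] for every code state $\psi\in\mathcal{C}$. Then there exists a single-qudit density matrix $\alpha$ such that every code state $\psi\in\mathcal{C}$ decomposes as $\psi=\alpha_i\otimes\psi_{[n]\setminus\{i\}}$ (with $\alpha$ on qudit $i$).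
   Context: $[n]=\{0,\dots,n-1\}$. A quantum code of block length $n$, local dimension $a$, dimension $k$ is an $a^k$-dimensional linear subspace of $(\mathbb{C}^a)^{\otimes n}$; code states are the density matrices $\psi=|\psi\rangle\langle\psi|$ of unit vectors $|\psi\rangle$ in it. $\mathcal{M}(A)$ is the set of density matrices on the qudits $A$, and $\psi_B$ is the reduced density matrix of $\psi$ on qudits $B$. *)

theory Defs
  imports Complex_Main
begin

text \<open>A basis configuration of the qudits in a set A
  (local dimension a) is a function x with x j < a for j in A and x j = 0 outside A.
  Vectors are functions from configurations to complex numbers, operators on the qudits A
  are kernels (matrices) indexed by pairs of configurations; only entries at configurations
  of A are meaningful.\<close>

type_synonym cfg = "nat \<Rightarrow> nat"
type_synonym qvec = "cfg \<Rightarrow> complex"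
type_synonym qop = "cfg \<Rightarrow> cfg \<Rightarrow> complex"

definition cfgs :: "nat \<Rightarrow> nat set \<Rightarrow> cfg set" where
  "cfgs a A = {x. (\<forall>j\<in>A. x j < a) \<and> (\<forall>j. j \<notin> A \<longrightarrow> x j = 0)}"

definition restr :: "nat set \<Rightarrow> cfg \<Rightarrow> cfg" where
  "restr A x = (\<lambda>j. if j \<in> A then x j else 0)"

definition join :: "nat set \<Rightarrow> cfg \<Rightarrow> cfg \<Rightarrow> cfg" where
  "join A u w = (\<lambda>j. if j \<in> A then u j else w j)"

definition density :: "nat \<Rightarrow> nat set \<Rightarrow> qop \<Rightarrow> bool" where
  "density a A \<rho> \<longleftrightarrow>
     (\<forall>v::qvec. let q = (\<Sum>x\<in>cfgs a A. \<Sum>y\<in>cfgs a A. cnj (v x) * \<rho> x y * v y)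
                in Im q = 0 \<and> Re q \<ge> 0)
     \<and> (\<Sum>x\<in>cfgs a A. \<rho> x x) = 1"

definition ptrace :: "nat \<Rightarrow> nat set \<Rightarrow> nat set \<Rightarrow> qop \<Rightarrow> qop" where
  "ptrace a A B \<rho> = (\<lambda>x y. \<Sum>z\<in>cfgs a (A - B). \<rho> (join B x z) (join B y z))"

definition reduced :: "nat \<Rightarrow> nat \<Rightarrow> nat set \<Rightarrow> qop \<Rightarrow> qop" where
  "reduced a n B \<rho> = ptrace a {..<n} B \<rho>"

definition tensor :: "nat set \<Rightarrow> nat set \<Rightarrow> qop \<Rightarrow> qop \<Rightarrow> qop" where
  "tensor A B \<sigma> \<tau> = (\<lambda>x y. \<sigma> (restr A x) (restr A y) * \<tau> (restr B x) (restr B y))"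

text \<open>Quantum channels M(S) \<rightarrow> M(T), in operator-sum (Kraus) form: a finite family of
  operators K : C^{cfgs S} \<rightarrow> C^{cfgs T} with \<Sum> K^\<dagger> K = id, and the channel acts as
  \<rho> \<mapsto> \<Sum> K \<rho> K^\<dagger>.\<close>
definition kraus_apply :: "nat \<Rightarrow> nat set \<Rightarrow> qop list \<Rightarrow> qop \<Rightarrow> qop" where
  "kraus_apply a S Ks \<rho> = (\<lambda>x y. \<Sum>K\<leftarrow>Ks. \<Sum>u\<in>cfgs a S. \<Sum>v\<in>cfgs a S.
        K x u * \<rho> u v * cnj (K y v))"

definition kraus_family :: "nat \<Rightarrow> nat set \<Rightarrow> nat set \<Rightarrow> qop list \<Rightarrow> bool" where
  "kraus_family a S T Ks \<longleftrightarrow>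
     (\<forall>u\<in>cfgs a S. \<forall>v\<in>cfgs a S.
        (\<Sum>K\<leftarrow>Ks. \<Sum>t\<in>cfgs a T. cnj (K t u) * K t v) = (if u = v then 1 else 0))"

definition quantum_channel :: "nat \<Rightarrow> nat set \<Rightarrow> nat set \<Rightarrow> (qop \<Rightarrow> qop) \<Rightarrow> bool" where
  "quantum_channel a S T \<Phi> \<longleftrightarrow>
     (\<exists>Ks. kraus_family a S T Ks \<and> (\<forall>\<rho>. \<Phi> \<rho> = kraus_apply a S Ks \<rho>))"

text \<open>(\<Phi> \<otimes> id_R) for a channel \<Phi> : M(S) \<rightarrow> M(T), applied to an operator on S \<union> R
  (R disjoint from S and T); defined by linear extension on matrix units of R.\<close>
definition channel_tensor_id :: "nat set \<Rightarrow> nat set \<Rightarrow> nat set \<Rightarrow> (qop \<Rightarrow> qop) \<Rightarrow> qop \<Rightarrow> qop" where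
  "channel_tensor_id S T R \<Phi> \<rho> =
     (\<lambda>x y. \<Phi> (\<lambda>u v. \<rho> (join S u (restr R x)) (join S v (restr R y))) (restr T x) (restr T y))"

definition is_subspace :: "nat \<Rightarrow> nat \<Rightarrow> qvec set \<Rightarrow> bool" where
  "is_subspace a n C \<longleftrightarrow>
     (\<forall>v\<in>C. \<forall>x. x \<notin> cfgs a {..<n} \<longrightarrow> v x = 0) \<and> (\<lambda>_. 0) \<in> C \<and>
     (\<forall>u\<in>C. \<forall>v\<in>C. (\<lambda>x. u x + v x) \<in> C) \<and> (\<forall>c. \<forall>v\<in>C. (\<lambda>x. c * v x) \<in> C)"

definition has_dim :: "qvec set \<Rightarrow> nat \<Rightarrow> bool" where
  "has_dim C d \<longleftrightarrow> (\<exists>B. finite B \<and> card B = d \<and> B \<subseteq> C \<and>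
     (\<forall>f. (\<lambda>x. \<Sum>b\<in>B. f b * b x) = (\<lambda>_. 0) \<longrightarrow> (\<forall>b\<in>B. f b = 0)) \<and>
     (\<forall>v\<in>C. \<exists>f. v = (\<lambda>x. \<Sum>b\<in>B. f b * b x)))"

definition quantum_code :: "nat \<Rightarrow> nat \<Rightarrow> nat \<Rightarrow> qvec set \<Rightarrow> bool" where
  "quantum_code a n k C \<longleftrightarrow> is_subspace a n C \<and> has_dim C (a ^ k)"

definition outer :: "qvec \<Rightarrow> qop" where
  "outer v = (\<lambda>x y. v x * cnj (v y))"

definition code_states :: "nat \<Rightarrow> nat \<Rightarrow> qvec set \<Rightarrow> qop set" where
  "code_states a n C = {outer v | v. v \<in> C \<and> (\<Sum>x\<in>cfgs a {..<n}. cmod (v x) ^ 2) = 1}"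

end

theory Submission
  imports Defs
begin

(* Write a recovery channel in Kraus form {K_j} and, for a code vector v and a basis value w of
   qudit i, let Q_jw v = (K_j (x) id)(<w|_i (x) id) v.  Exact recovery of |v><v| from its marginal
   off qudit i says sum_jw |Q_jw v><Q_jw v| = |v><v|, so Q_jw maps every code vector to a multiple
   of itself and, the code being a subspace, by a multiple c_jw independent of v, with
   sum_jw |c_jw|^2 = 1.  The Kraus operators of the two channels act on the disjoint sets
   I^1 - {i} and I^2 - {i}; evaluating their composite in both orders gives
   d_z c_w' v(x[i:=w]) = c_z d_w v(x[i:=w']).  Fixing c and d nonzero, every code vector satisfies
   v(x) = phi(x_i) v(x[i:=z0]) for one phi, so psi = alpha_i (x) psi_[n]-{i} with
   alpha = |phi><phi| / |phi|^2. *)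

lemma finite_cfgs: "finite A \<Longrightarrow> finite (cfgs a A)"
proof (induction A rule: finite_induct)
  case empty
  have "cfgs a {} = {\<lambda>_. 0}" unfolding cfgs_def by auto
  then show ?case by simp
next
  case (insert j A)
  have "cfgs a (insert j A) \<subseteq> (\<lambda>(w, x). x(j := w)) ` ({..<a} \<times> cfgs a A)"
  proof
    fix y assume y: "y \<in> cfgs a (insert j A)"
    have "(y j, y(j := 0)) \<in> {..<a} \<times> cfgs a A" using y insert.hyps(2) unfolding cfgs_def by auto
    moreover have "y = (\<lambda>(w, x). x(j := w)) (y j, y(j := 0))" by simp
    ultimately show "y \<in> (\<lambda>(w, x). x(j := w)) ` ({..<a} \<times> cfgs a A)" by (rule rev_image_eqI)
  qed
  then show ?case by (rule finite_subset) (simp add: insert.IH)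
qed

lemma sum_cfgs_singleton: "(\<Sum>z\<in>cfgs a {i}. f z) = (\<Sum>w<a. f ((\<lambda>_. 0)(i := w)))"
proof -
  have "cfgs a {i} = (\<lambda>w. (\<lambda>_. 0)(i := w)) ` {..<a}"
    unfolding cfgs_def by (auto simp: image_iff fun_eq_iff)
  moreover have "inj (\<lambda>w. ((\<lambda>_. 0 :: nat)(i := w)))" by (auto intro!: injI dest: fun_cong[of _ _ i])
  ultimately show ?thesis by (simp add: sum.reindex inj_on_subset)
qed

lemma fun_upd_in_cfgs: "x \<in> cfgs a A \<Longrightarrow> i \<in> A \<Longrightarrow> w < a \<Longrightarrow> x(i := w) \<in> cfgs a A"
  unfolding cfgs_def by auto

lemma join_in_cfgs: "u \<in> cfgs a S \<Longrightarrow> y \<in> cfgs a A \<Longrightarrow> S \<subseteq> A \<Longrightarrow> join S u y \<in> cfgs a A"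
  unfolding cfgs_def join_def by auto

lemma join_commute: "A \<inter> B = {} \<Longrightarrow> join A u (join B u' y) = join B u' (join A u y)"
  unfolding join_def by (auto simp: fun_eq_iff)

lemma join_fun_upd: "i \<notin> A \<Longrightarrow> (join A u y)(i := z) = join A u (y(i := z))"
  unfolding join_def by (auto simp: fun_eq_iff)

lemma restr_join_disjoint: "A \<inter> B = {} \<Longrightarrow> restr B (join A u y) = restr B y"
  unfolding join_def restr_def by (auto simp: fun_eq_iff)

lemma ptrace_remove_singleton:
  assumes "i \<in> A" "\<forall>j. j \<notin> A \<longrightarrow> x j = 0" "\<forall>j. j \<notin> A \<longrightarrow> y j = 0"
  shows "ptrace a A (A - {i}) \<rho> x y = (\<Sum>w<a. \<rho> (x(i := w)) (y(i := w)))"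
proof -
  have "A - (A - {i}) = {i}" using assms(1) by blast
  moreover have "join (A - {i}) z ((\<lambda>_. 0)(i := w)) = z(i := w)" if "\<forall>j. j \<notin> A \<longrightarrow> z j = 0" for z w
    using that unfolding join_def by (auto simp: fun_eq_iff)
  ultimately show ?thesis using assms(2,3) by (simp add: ptrace_def sum_cfgs_singleton)
qed

lemma sum_outer_eq_outer_proportional:
  fixes V :: "'k \<Rightarrow> 'a \<Rightarrow> complex" and v :: "'a \<Rightarrow> complex"
  assumes "finite J"
    and outer: "\<forall>x\<in>X. \<forall>y\<in>X. (\<Sum>k\<in>J. V k x * cnj (V k y)) = v x * cnj (v y)"
    and "x0 \<in> X" "x \<in> X" "k \<in> J"
  shows "V k x * v x0 = V k x0 * v x"
proof -
  define D where "D k = V k x * v x0 - V k x0 * v x" for k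
  have expand: "D k * cnj (D k) =
      (V k x * cnj (V k x)) * (v x0 * cnj (v x0)) - (V k x * cnj (V k x0)) * (v x0 * cnj (v x))
    - (V k x0 * cnj (V k x)) * (v x * cnj (v x0)) + (V k x0 * cnj (V k x0)) * (v x * cnj (v x))" for k
    unfolding D_def by (simp add: algebra_simps)
  have "(\<Sum>k\<in>J. D k * cnj (D k)) =
      (\<Sum>k\<in>J. V k x * cnj (V k x)) * (v x0 * cnj (v x0))
    - (\<Sum>k\<in>J. V k x * cnj (V k x0)) * (v x0 * cnj (v x))
    - (\<Sum>k\<in>J. V k x0 * cnj (V k x)) * (v x * cnj (v x0))
    + (\<Sum>k\<in>J. V k x0 * cnj (V k x0)) * (v x * cnj (v x))"
    unfolding expand by (simp add: sum.distrib sum_subtractf sum_distrib_right)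
  also have "\<dots> = 0" using outer assms(3,4) by (simp add: algebra_simps)
  finally have "complex_of_real (\<Sum>k\<in>J. (cmod (D k))\<^sup>2) = 0"
    by (simp only: of_real_sum complex_norm_square)
  then have "(\<Sum>k\<in>J. (cmod (D k))\<^sup>2) = 0" using of_real_eq_0_iff by blast
  then have "(cmod (D k))\<^sup>2 = 0" using assms(1,5) by (simp add: sum_nonneg_eq_0_iff)
  then show ?thesis unfolding D_def by simp
qed

lemma common_eigenvalue:
  fixes Q :: "('a \<Rightarrow> 'b::field) \<Rightarrow> 'a \<Rightarrow> 'b"
  assumes add: "\<forall>u\<in>C. \<forall>w\<in>C. (\<lambda>x. u x + w x) \<in> C"
    and supp: "\<forall>u\<in>C. \<forall>x. x \<notin> X \<longrightarrow> u x = 0"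
    and Q_add: "\<And>u w x. Q (\<lambda>x. u x + w x) x = Q u x + Q w x"
    and Q_scale: "\<And>t u x. Q (\<lambda>x. t * u x) x = t * Q u x"
    and eig: "\<And>u. u \<in> C \<Longrightarrow> \<exists>c. \<forall>x\<in>X. Q u x = c * u x"
  shows "\<exists>c. \<forall>u\<in>C. \<forall>x\<in>X. Q u x = c * u x"
proof (cases "\<exists>v\<in>C. \<exists>x\<in>X. v x \<noteq> 0")
  case False
  then have "\<forall>u\<in>C. \<forall>x\<in>X. Q u x = 0 * u x" using eig by fastforce
  then show ?thesis by blast
next
  case True
  then obtain v x0 where v: "v \<in> C" "x0 \<in> X" "v x0 \<noteq> 0" by blast
  obtain c where c: "\<forall>x\<in>X. Q v x = c * v x" using eig[OF v(1)] by blast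
  have "\<forall>x\<in>X. Q u x = c * u x" if u: "u \<in> C" for u
  proof -
    obtain cu where cu: "\<forall>x\<in>X. Q u x = cu * u x" using eig[OF u] by blast
    have "(\<lambda>x. u x + v x) \<in> C" using add u v(1) by blast
    then obtain cs where cs: "\<forall>x\<in>X. Q (\<lambda>x. u x + v x) x = cs * (u x + v x)" using eig by blast
    have lin_dep: "(cs - cu) * u x = (c - cs) * v x" if "x \<in> X" for x
      using cs cu c Q_add[of u v x] that by (auto simp: algebra_simps)
    show ?thesis
    proof (cases "cs = cu")
      case True
      then have "c = cs" using lin_dep[OF v(2)] v(3) by simp
      then show ?thesis using cu True by simp
    next
      case False
      define t where "t = (c - cs) / (cs - cu)"
      have "u = (\<lambda>x. t * v x)"
      proof
        fix x show "u x = t * v x"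
        proof (cases "x \<in> X")
          case True
          then show ?thesis using lin_dep[OF True] False unfolding t_def by (simp add: field_simps)
        next
          case False
          then have "u x = 0" "v x = 0" using supp u v(1) by blast+
          then show ?thesis by simp
        qed
      qed
      then show ?thesis using c Q_scale by simp
    qed
  qed
  then show ?thesis by blast
qed

(* (K (x) id)(<w|_i (x) id) v, with K mapping the qudits S to T *)
definition kraus_branch :: "nat \<Rightarrow> nat set \<Rightarrow> nat set \<Rightarrow> nat \<Rightarrow> qop \<Rightarrow> nat \<Rightarrow> qvec \<Rightarrow> qvec" where
  "kraus_branch a S T i K w v x = (\<Sum>u\<in>cfgs a S. K (restr T x) u * v (join S u (x(i := w))))"

lemma kraus_branch_add:
  "kraus_branch a S T i K w (\<lambda>x. u x + u' x) x = kraus_branch a S T i K w u x + kraus_branch a S T i K w u' x"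
  unfolding kraus_branch_def by (simp add: sum.distrib algebra_simps)

lemma kraus_branch_scale: "kraus_branch a S T i K w (\<lambda>x. t * u x) x = t * kraus_branch a S T i K w u x"
  unfolding kraus_branch_def by (simp add: sum_distrib_left algebra_simps)

lemma channel_tensor_id_kraus_reduced_outer:
  assumes "i \<in> T" "T \<subseteq> {..<n}" "x \<in> cfgs a {..<n}" "y \<in> cfgs a {..<n}"
  shows "channel_tensor_id (T - {i}) T ({..<n} - T) (kraus_apply a (T - {i}) Ks)
           (reduced a n ({..<n} - {i}) (outer v)) x y =
         (\<Sum>(j, w)\<in>{..<length Ks} \<times> {..<a}.
            kraus_branch a (T - {i}) T i (Ks ! j) w v x * cnj (kraus_branch a (T - {i}) T i (Ks ! j) w v y))"
proof -
  let ?S = "T - {i}" and ?R = "{..<n} - T"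
  have glue: "(join ?S u (restr ?R z))(i := w) = join ?S u (z(i := w))" if "z \<in> cfgs a {..<n}" for u z w
    using that assms(1,2) unfolding join_def restr_def cfgs_def by (auto simp: fun_eq_iff)
  have reduced: "reduced a n ({..<n} - {i}) (outer v) (join ?S u (restr ?R x)) (join ?S u' (restr ?R y)) =
      (\<Sum>w<a. v (join ?S u (x(i := w))) * cnj (v (join ?S u' (y(i := w)))))" for u u'
  proof -
    have "\<forall>j. j \<notin> {..<n} \<longrightarrow> join ?S u'' (restr ?R z) j = 0" for u'' z
      using assms(2) unfolding join_def restr_def by auto
    then show ?thesis
      unfolding reduced_def using assms(1,2) glue[OF assms(3)] glue[OF assms(4)]
      by (simp add: ptrace_remove_singleton outer_def subset_iff)
  qed
  have regroup: "(\<Sum>u\<in>cfgs a ?S. \<Sum>u'\<in>cfgs a ?S. K (restr T x) u *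
        (\<Sum>w<a. v (join ?S u (x(i := w))) * cnj (v (join ?S u' (y(i := w))))) * cnj (K (restr T y) u'))
     = (\<Sum>w<a. kraus_branch a ?S T i K w v x * cnj (kraus_branch a ?S T i K w v y))" for K
    unfolding kraus_branch_def
    by (simp add: sum_distrib_left sum_distrib_right sum.swap[of _ "{..<a}"] mult_ac)
      (rule sum.cong[OF refl], rule sum.swap)
  show ?thesis
    unfolding channel_tensor_id_def kraus_apply_def reduced regroup
    by (simp add: sum_list_sum_nth atLeast0LessThan sum.cartesian_product)
qed

definition recovers_qudit :: "nat \<Rightarrow> nat \<Rightarrow> qvec set \<Rightarrow> nat \<Rightarrow> nat set \<Rightarrow> (qop \<Rightarrow> qop) \<Rightarrow> bool" where
  "recovers_qudit a n C i T \<Phi> \<longleftrightarrow>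
     (\<forall>\<psi>\<in>code_states a n C. \<forall>x\<in>cfgs a {..<n}. \<forall>y\<in>cfgs a {..<n}.
        channel_tensor_id (T - {i}) T ({..<n} - T) \<Phi> (reduced a n ({..<n} - {i}) \<psi>) x y = \<psi> x y)"

lemma normalized_outer_in_code_states:
  assumes sub: "is_subspace a n C" and u: "u \<in> C"
    and nonzero: "(\<Sum>x\<in>cfgs a {..<n}. (cmod (u x))\<^sup>2) \<noteq> 0"
  shows "outer (\<lambda>x. complex_of_real (1 / sqrt (\<Sum>x\<in>cfgs a {..<n}. (cmod (u x))\<^sup>2)) * u x)
           \<in> code_states a n C"
proof -
  define N where "N = (\<Sum>x\<in>cfgs a {..<n}. (cmod (u x))\<^sup>2)"
  have "N > 0" using nonzero unfolding N_def by (simp add: order_le_neq_trans sum_nonneg)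
  have "(\<Sum>x\<in>cfgs a {..<n}. cmod (complex_of_real (1 / sqrt N) * u x) ^ 2) = (1 / sqrt N) ^ 2 * N"
    unfolding N_def by (simp only: norm_mult power_mult_distrib sum_distrib_left norm_of_real power2_abs)
  also have "\<dots> = 1" using \<open>N > 0\<close> by (simp add: power_divide)
  finally show ?thesis
    using sub u unfolding code_states_def is_subspace_def N_def[symmetric] by blast
qed

lemma kraus_branch_rank_one:
  assumes sub: "is_subspace a n C" and T: "i \<in> T" "T \<subseteq> {..<n}"
    and rec: "recovers_qudit a n C i T (kraus_apply a (T - {i}) Ks)"
    and u: "u \<in> C" and xy: "x \<in> cfgs a {..<n}" "y \<in> cfgs a {..<n}"
  shows "(\<Sum>(j, w)\<in>{..<length Ks} \<times> {..<a}.
      kraus_branch a (T - {i}) T i (Ks ! j) w u x * cnj (kraus_branch a (T - {i}) T i (Ks ! j) w u y))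
    = u x * cnj (u y)"
proof -
  let ?X = "cfgs a {..<n}" and ?J = "{..<length Ks} \<times> {..<a}"
  let ?Q = "\<lambda>j w. kraus_branch a (T - {i}) T i (Ks ! j) w"
  define N where "N = (\<Sum>x\<in>?X. (cmod (u x))\<^sup>2)"
  have N_nonneg: "N \<ge> 0" unfolding N_def by (simp add: sum_nonneg)
  show ?thesis
  proof (cases "N = 0")
    case True
    have "\<forall>x\<in>?X. (cmod (u x))\<^sup>2 = 0"
      using True finite_cfgs[of "{..<n}" a] unfolding N_def by (simp add: sum_nonneg_eq_0_iff)
    then have "u = (\<lambda>_. 0)" using sub u unfolding is_subspace_def by fastforce
    then show ?thesis unfolding kraus_branch_def by simp
  next
    case False
    define r where "r = complex_of_real (1 / sqrt N)"
    define u' where "u' = (\<lambda>x. r * u x)"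
    have r: "r \<noteq> 0" "cnj r = r" using False N_nonneg unfolding r_def by auto
    have "outer u' \<in> code_states a n C"
      unfolding u'_def r_def N_def by (rule normalized_outer_in_code_states[OF sub u False[unfolded N_def]])
    then have "channel_tensor_id (T - {i}) T ({..<n} - T) (kraus_apply a (T - {i}) Ks)
        (reduced a n ({..<n} - {i}) (outer u')) x y = outer u' x y"
      using rec xy unfolding recovers_qudit_def by blast
    then have "(\<Sum>(j, w)\<in>?J. ?Q j w u' x * cnj (?Q j w u' y)) = u' x * cnj (u' y)"
      by (simp only: channel_tensor_id_kraus_reduced_outer[OF T xy]) (simp add: outer_def)
    then have "r * r * (\<Sum>(j, w)\<in>?J. ?Q j w u x * cnj (?Q j w u y)) = r * r * (u x * cnj (u y))"
      unfolding u'_def kraus_branch_scale using r(2)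
      by (simp add: sum_distrib_left case_prod_unfold mult_ac)
    then show ?thesis using r(1) by simp
  qed
qed

lemma kraus_branch_eigenvector:
  assumes sub: "is_subspace a n C" and T: "i \<in> T" "T \<subseteq> {..<n}"
    and rec: "recovers_qudit a n C i T (kraus_apply a (T - {i}) Ks)"
    and k: "j < length Ks" "w < a" and u: "u \<in> C"
  shows "\<exists>c. \<forall>x\<in>cfgs a {..<n}. kraus_branch a (T - {i}) T i (Ks ! j) w u x = c * u x"
proof (cases "\<exists>x1\<in>cfgs a {..<n}. u x1 \<noteq> 0")
  case True
  then obtain x1 where x1: "x1 \<in> cfgs a {..<n}" "u x1 \<noteq> 0" by blast
  let ?Q = "\<lambda>(j, w). kraus_branch a (T - {i}) T i (Ks ! j) w u"
  have "?Q (j, w) x * u x1 = ?Q (j, w) x1 * u x" if "x \<in> cfgs a {..<n}" for x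
  proof (rule sum_outer_eq_outer_proportional[OF _ _ x1(1) that])
    show "\<forall>x\<in>cfgs a {..<n}. \<forall>y\<in>cfgs a {..<n}.
        (\<Sum>k\<in>{..<length Ks} \<times> {..<a}. ?Q k x * cnj (?Q k y)) = u x * cnj (u y)"
      using kraus_branch_rank_one[OF sub T rec u] by (simp add: case_prod_unfold)
  qed (use k in auto)
  then have "\<forall>x\<in>cfgs a {..<n}. ?Q (j, w) x = ?Q (j, w) x1 / u x1 * u x"
    using x1(2) by (simp add: field_simps)
  then show ?thesis by (simp only: case_prod_conv) blast
next
  case False
  then have "u = (\<lambda>_. 0)" using sub u unfolding is_subspace_def by fastforce
  then show ?thesis unfolding kraus_branch_def by simp
qed

lemma kraus_branch_scalar_on_code:
  assumes sub: "is_subspace a n C" and T: "i \<in> T" "T \<subseteq> {..<n}"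
    and rec: "recovers_qudit a n C i T (kraus_apply a (T - {i}) Ks)"
    and v0: "v0 \<in> C" "x0 \<in> cfgs a {..<n}" "v0 x0 \<noteq> 0"
  shows "\<exists>c. (\<forall>j<length Ks. \<forall>w<a. \<forall>v\<in>C. \<forall>x\<in>cfgs a {..<n}.
              kraus_branch a (T - {i}) T i (Ks ! j) w v x = c (j, w) * v x)
           \<and> (\<Sum>k\<in>{..<length Ks} \<times> {..<a}. (cmod (c k))\<^sup>2) = 1"
proof -
  let ?X = "cfgs a {..<n}" and ?J = "{..<length Ks} \<times> {..<a}"
  let ?Q = "\<lambda>j w. kraus_branch a (T - {i}) T i (Ks ! j) w"
  have closed: "\<forall>u\<in>C. \<forall>w\<in>C. (\<lambda>x. u x + w x) \<in> C" and supp: "\<forall>u\<in>C. \<forall>x. x \<notin> ?X \<longrightarrow> u x = 0"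
    using sub unfolding is_subspace_def by blast+
  have "\<exists>c. \<forall>v\<in>C. \<forall>x\<in>?X. ?Q j w v x = c * v x" if "j < length Ks" "w < a" for j w
    by (rule common_eigenvalue[OF closed supp kraus_branch_add kraus_branch_scale
          kraus_branch_eigenvector[OF sub T rec that]])
  then have "\<forall>k\<in>?J. \<exists>c. \<forall>v\<in>C. \<forall>x\<in>?X. ?Q (fst k) (snd k) v x = c * v x" by auto
  then obtain c where c: "\<forall>k\<in>?J. \<forall>v\<in>C. \<forall>x\<in>?X. ?Q (fst k) (snd k) v x = c k * v x"
    by (metis bchoice)
  have "(\<Sum>k\<in>?J. c k * cnj (c k)) * (v0 x0 * cnj (v0 x0))
      = (\<Sum>(j, w)\<in>?J. ?Q j w v0 x0 * cnj (?Q j w v0 x0))"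
    unfolding sum_distrib_right using c v0(1,2) by (intro sum.cong) (auto simp: mult_ac)
  also have "\<dots> = v0 x0 * cnj (v0 x0)" by (rule kraus_branch_rank_one[OF sub T rec v0(1,2,2)])
  finally have "(\<Sum>k\<in>?J. c k * cnj (c k)) = 1" using v0(3) by simp
  then have "complex_of_real (\<Sum>k\<in>?J. (cmod (c k))\<^sup>2) = 1"
    by (simp only: of_real_sum complex_norm_square)
  then have "(\<Sum>k\<in>?J. (cmod (c k))\<^sup>2) = 1" using of_real_eq_1_iff by blast
  moreover have "\<forall>j<length Ks. \<forall>w<a. \<forall>v\<in>C. \<forall>x\<in>?X. ?Q j w v x = c (j, w) * v x"
    using c by auto
  ultimately show ?thesis by blast
qed

lemma kraus_branch_double_sum:
  assumes I: "I \<inter> I' = {i}" "I \<subseteq> {..<n}" "I' \<subseteq> {..<n}"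
    and x: "x \<in> cfgs a {..<n}" and w: "w < a" "w' < a"
    and L: "\<forall>y\<in>cfgs a {..<n}. kraus_branch a (I' - {i}) I' i L z v y = d * v y"
    and K: "\<forall>y\<in>cfgs a {..<n}. kraus_branch a (I - {i}) I i K w' v y = c * v y"
  shows "(\<Sum>u\<in>cfgs a (I - {i}). \<Sum>u'\<in>cfgs a (I' - {i}).
            K (restr I (x(i := w))) u * L (restr I' (x(i := w'))) u' *
            v (join (I - {i}) u (join (I' - {i}) u' (x(i := z)))))
         = d * c * v (x(i := w))"
proof -
  let ?S = "I - {i}" and ?S' = "I' - {i}"
  have i: "i \<in> {..<n}" using I by blast
  have inner: "(\<Sum>u'\<in>cfgs a ?S'. L (restr I' (x(i := w'))) u' * v (join ?S u (join ?S' u' (x(i := z)))))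
      = d * v (join ?S u (x(i := w')))" if u: "u \<in> cfgs a ?S" for u
  proof -
    let ?y = "join ?S u (x(i := w'))"
    have y: "?y \<in> cfgs a {..<n}" using I by (intro join_in_cfgs[OF u] fun_upd_in_cfgs[OF x i w(2)]) auto
    have restr_y: "restr I' ?y = restr I' (x(i := w'))" using I by (intro restr_join_disjoint) auto
    have join_y: "join ?S' u' (?y(i := z)) = join ?S u (join ?S' u' (x(i := z)))" for u'
    proof -
      have "?S' \<inter> ?S = {}" using I(1) by blast
      then show ?thesis by (simp add: join_fun_upd join_commute)
    qed
    have "(\<Sum>u'\<in>cfgs a ?S'. L (restr I' (x(i := w'))) u' * v (join ?S u (join ?S' u' (x(i := z)))))
        = kraus_branch a ?S' I' i L z v ?y"
      unfolding kraus_branch_def restr_y join_y ..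
    also have "\<dots> = d * v ?y" using L y by blast
    finally show ?thesis .
  qed
  have "(\<Sum>u\<in>cfgs a ?S. \<Sum>u'\<in>cfgs a ?S'. K (restr I (x(i := w))) u * L (restr I' (x(i := w'))) u' *
          v (join ?S u (join ?S' u' (x(i := z)))))
      = (\<Sum>u\<in>cfgs a ?S. K (restr I (x(i := w))) u * (d * v (join ?S u (x(i := w')))))"
    by (simp add: inner mult.assoc flip: sum_distrib_left)
  also have "\<dots> = d * kraus_branch a ?S I i K w' v (x(i := w))"
    unfolding kraus_branch_def by (simp add: sum_distrib_left mult_ac)
  also have "\<dots> = d * c * v (x(i := w))" using K fun_upd_in_cfgs[OF x i w(1)] by simp
  finally show ?thesis .
qed

lemma kraus_branches_commute:
  assumes I: "I \<inter> I' = {i}" "I \<subseteq> {..<n}" "I' \<subseteq> {..<n}"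
    and x: "x \<in> cfgs a {..<n}" and w: "w < a" "w' < a" "z < a"
    and K: "\<forall>w<a. \<forall>y\<in>cfgs a {..<n}. kraus_branch a (I - {i}) I i K w v y = c w * v y"
    and L: "\<forall>w<a. \<forall>y\<in>cfgs a {..<n}. kraus_branch a (I' - {i}) I' i L w v y = d w * v y"
  shows "d z * c w' * v (x(i := w)) = c z * d w * v (x(i := w'))"
proof -
  have disjoint: "(I - {i}) \<inter> (I' - {i}) = {}" using I(1) by blast
  have I': "I' \<inter> I = {i}" using I(1) by blast
  have K_at: "\<forall>y\<in>cfgs a {..<n}. kraus_branch a (I - {i}) I i K t v y = c t * v y" if "t < a" for t
    using K that by blast
  have L_at: "\<forall>y\<in>cfgs a {..<n}. kraus_branch a (I' - {i}) I' i L t v y = d t * v y" if "t < a" for t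
    using L that by blast
  have "d z * c w' * v (x(i := w)) =
      (\<Sum>u\<in>cfgs a (I - {i}). \<Sum>u'\<in>cfgs a (I' - {i}).
        K (restr I (x(i := w))) u * L (restr I' (x(i := w'))) u' *
        v (join (I - {i}) u (join (I' - {i}) u' (x(i := z)))))"
    using kraus_branch_double_sum[OF I x w(1,2) L_at[OF w(3)] K_at[OF w(2)]] by simp
  also have "\<dots> =
      (\<Sum>u'\<in>cfgs a (I' - {i}). \<Sum>u\<in>cfgs a (I - {i}).
        L (restr I' (x(i := w'))) u' * K (restr I (x(i := w))) u *
        v (join (I' - {i}) u' (join (I - {i}) u (x(i := z)))))"
    by (subst sum.swap) (simp add: join_commute[OF disjoint] mult_ac)
  also have "\<dots> = c z * d w * v (x(i := w'))"
    using kraus_branch_double_sum[OF I' I(3,2) x w(2,1) K_at[OF w(3)] L_at[OF w(1)]] by simp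
  finally show ?thesis .
qed

lemma code_vectors_factor_at_shared_qudit:
  assumes a: "0 < a" and sub: "is_subspace a n C"
    and I: "I \<inter> I' = {i}" "I \<subseteq> {..<n}" "I' \<subseteq> {..<n}"
    and rec: "recovers_qudit a n C i I (kraus_apply a (I - {i}) Ks)"
    and rec': "recovers_qudit a n C i I' (kraus_apply a (I' - {i}) Ls)"
  shows "\<exists>\<phi> z0 w0. z0 < a \<and> w0 < a \<and> \<phi> w0 \<noteq> 0 \<and>
           (\<forall>v\<in>C. \<forall>x\<in>cfgs a {..<n}. v x = \<phi> (x i) * v (x(i := z0)))"
proof (cases "\<exists>v\<in>C. \<exists>x\<in>cfgs a {..<n}. v x \<noteq> 0")
  case False
  \<comment> \<open>the zero code; covering it makes the hypothesis 0 < k of the main theorem unnecessary\<close>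
  have "i \<in> {..<n}" using I by blast
  then have "\<forall>v\<in>C. \<forall>x\<in>cfgs a {..<n}. v x = 1 * v (x(i := 0))"
    using False fun_upd_in_cfgs[OF _ _ a] by fastforce
  then show ?thesis using a by (intro exI[of _ "\<lambda>_. 1"] exI[of _ 0]) auto
next
  case True
  then obtain v0 x0 where v0: "v0 \<in> C" "x0 \<in> cfgs a {..<n}" "v0 x0 \<noteq> 0" by blast
  have i: "i \<in> I" "i \<in> I'" using I(1) by auto
  obtain c where c: "\<forall>j<length Ks. \<forall>w<a. \<forall>v\<in>C. \<forall>x\<in>cfgs a {..<n}.
        kraus_branch a (I - {i}) I i (Ks ! j) w v x = c (j, w) * v x"
      and c_unit: "(\<Sum>k\<in>{..<length Ks} \<times> {..<a}. (cmod (c k))\<^sup>2) = 1"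
    using kraus_branch_scalar_on_code[OF sub i(1) I(2) rec v0] by blast
  obtain d where d: "\<forall>j<length Ls. \<forall>w<a. \<forall>v\<in>C. \<forall>x\<in>cfgs a {..<n}.
        kraus_branch a (I' - {i}) I' i (Ls ! j) w v x = d (j, w) * v x"
      and d_unit: "(\<Sum>k\<in>{..<length Ls} \<times> {..<a}. (cmod (d k))\<^sup>2) = 1"
    using kraus_branch_scalar_on_code[OF sub i(2) I(3) rec' v0] by blast
  obtain j1 z0 where j1: "j1 < length Ks" "z0 < a" "c (j1, z0) \<noteq> 0"
    using c_unit by (metis (no_types, lifting) SigmaE lessThan_iff norm_zero power_zero_numeral sum.neutral zero_neq_one)
  obtain j2 z1 where j2: "j2 < length Ls" "z1 < a" "d (j2, z1) \<noteq> 0"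
    using d_unit by (metis (no_types, lifting) SigmaE lessThan_iff norm_zero power_zero_numeral sum.neutral zero_neq_one)
  \<comment> \<open>solve kraus_branches_commute with w' = z0 and z = z1 for v (x(i := w))\<close>
  define \<phi> where "\<phi> w = c (j1, z1) * d (j2, w) / (d (j2, z1) * c (j1, z0))" for w
  have factor: "v x = \<phi> (x i) * v (x(i := z0))" if v: "v \<in> C" and x: "x \<in> cfgs a {..<n}" for v x
  proof -
    have "x i < a" using x i I(2) unfolding cfgs_def by auto
    moreover have "\<forall>w<a. \<forall>y\<in>cfgs a {..<n}. kraus_branch a (I - {i}) I i (Ks ! j1) w v y = c (j1, w) * v y"
      using c j1(1) v by blast
    moreover have "\<forall>w<a. \<forall>y\<in>cfgs a {..<n}. kraus_branch a (I' - {i}) I' i (Ls ! j2) w v y = d (j2, w) * v y"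
      using d j2(1) v by blast
    ultimately have "d (j2, z1) * c (j1, z0) * v (x(i := x i)) = c (j1, z1) * d (j2, x i) * v (x(i := z0))"
      by (rule kraus_branches_commute[OF I x _ j1(2) j2(2)])
    then show ?thesis using j1(3) j2(3) unfolding \<phi>_def by (simp add: field_simps)
  qed
  have "x0 i < a" using v0(2) i I(2) unfolding cfgs_def by auto
  moreover have "\<phi> (x0 i) \<noteq> 0" using factor[OF v0(1,2)] v0(3) by auto
  ultimately show ?thesis using factor j1(2) by blast
qed

lemma density_scaled_outer:
  assumes "(\<Sum>x\<in>cfgs a A. (cmod (\<phi> x))\<^sup>2) = r" "r > 0"
  shows "density a A (\<lambda>x y. \<phi> x * cnj (\<phi> y) / complex_of_real r)"
proof -
  have form: "(\<Sum>x\<in>cfgs a A. \<Sum>y\<in>cfgs a A. cnj (v x) * (\<phi> x * cnj (\<phi> y) / complex_of_real r) * v y)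
      = complex_of_real ((cmod (\<Sum>x\<in>cfgs a A. cnj (v x) * \<phi> x))\<^sup>2 / r)" for v :: qvec
  proof -
    let ?p = "\<Sum>x\<in>cfgs a A. cnj (v x) * \<phi> x"
    have "cnj ?p = (\<Sum>y\<in>cfgs a A. cnj (\<phi> y) * v y)" by (simp add: mult.commute)
    then have "(\<Sum>x\<in>cfgs a A. \<Sum>y\<in>cfgs a A. cnj (v x) * (\<phi> x * cnj (\<phi> y) / complex_of_real r) * v y)
        = ?p * cnj ?p / complex_of_real r"
      by (simp add: sum_product sum_divide_distrib mult_ac)
    also have "\<dots> = complex_of_real ((cmod ?p)\<^sup>2 / r)"
      by (simp only: of_real_divide complex_norm_square)
    finally show ?thesis .
  qed
  have "(\<Sum>x\<in>cfgs a A. \<phi> x * cnj (\<phi> x)) = complex_of_real r"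
    unfolding assms(1)[symmetric] by (simp only: of_real_sum complex_norm_square)
  then have "(\<Sum>x\<in>cfgs a A. \<phi> x * cnj (\<phi> x) / complex_of_real r) = 1"
    using assms(2) by (simp flip: sum_divide_distrib)
  then show ?thesis unfolding density_def Let_def form using assms(2) by simp
qed

lemma reduced_outer_remove_singleton:
  assumes "i < n" "x \<in> cfgs a {..<n}" "y \<in> cfgs a {..<n}"
  shows "reduced a n ({..<n} - {i}) (outer v) (restr ({..<n} - {i}) x) (restr ({..<n} - {i}) y)
       = (\<Sum>w<a. v (x(i := w)) * cnj (v (y(i := w))))"
proof -
  have "(restr ({..<n} - {i}) z)(i := w) = z(i := w)" if "z \<in> cfgs a {..<n}" for z w
    using that assms(1) unfolding restr_def cfgs_def by (auto simp: fun_eq_iff)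
  then show ?thesis
    using assms unfolding reduced_def by (simp add: ptrace_remove_singleton restr_def outer_def)
qed

lemma product_state_of_factorization:
  assumes i: "i < n" and z0: "z0 < a" and nonzero: "w0 < a" "\<phi> w0 \<noteq> 0"
    and factor: "\<forall>v\<in>C. \<forall>x\<in>cfgs a {..<n}. v x = \<phi> (x i) * v (x(i := z0))"
  shows "\<exists>\<alpha>. density a {i} \<alpha> \<and>
           (\<forall>\<psi>\<in>code_states a n C. \<forall>x\<in>cfgs a {..<n}. \<forall>y\<in>cfgs a {..<n}.
              \<psi> x y = tensor {i} ({..<n} - {i}) \<alpha> (reduced a n ({..<n} - {i}) \<psi>) x y)"
proof -
  let ?X = "cfgs a {..<n}" and ?B = "{..<n} - {i}"
  define N where "N = (\<Sum>w<a. (cmod (\<phi> w))\<^sup>2)"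
  define \<alpha> :: qop where "\<alpha> p q = \<phi> (p i) * cnj (\<phi> (q i)) / complex_of_real N" for p q
  have "(cmod (\<phi> w0))\<^sup>2 \<le> N" unfolding N_def using nonzero(1) by (intro member_le_sum) auto
  moreover have "(cmod (\<phi> w0))\<^sup>2 > 0" using nonzero(2) by simp
  ultimately have N_pos: "N > 0" by linarith
  have "density a {i} \<alpha>"
    unfolding \<alpha>_def using density_scaled_outer[OF _ N_pos, where a = a and A = "{i}" and \<phi> = "\<lambda>p. \<phi> (p i)"]
    by (simp add: sum_cfgs_singleton N_def)
  moreover have "\<psi> x y = tensor {i} ?B \<alpha> (reduced a n ?B \<psi>) x y"
    if psi: "\<psi> \<in> code_states a n C" and x: "x \<in> ?X" and y: "y \<in> ?X" for \<psi> x y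
  proof -
    obtain v where v: "\<psi> = outer v" "v \<in> C" using psi unfolding code_states_def by blast
    have i': "i \<in> {..<n}" using i by simp
    have slice: "v (z(i := w)) = \<phi> w * v (z(i := z0))" if "z \<in> ?X" "w < a" for z w
      using factor[rule_format, OF v(2) fun_upd_in_cfgs[OF that(1) i' that(2)]] by simp
    let ?P = "v (x(i := z0)) * cnj (v (y(i := z0)))"
    have "reduced a n ?B \<psi> (restr ?B x) (restr ?B y) = (\<Sum>w<a. \<phi> w * cnj (\<phi> w) * ?P)"
      unfolding v(1) reduced_outer_remove_singleton[OF i x y] using slice x y by (intro sum.cong) auto
    also have "\<dots> = complex_of_real N * ?P"
      unfolding N_def by (simp only: of_real_sum complex_norm_square sum_distrib_right)
    finally have "reduced a n ?B \<psi> (restr ?B x) (restr ?B y) = complex_of_real N * ?P" .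
    moreover have "\<psi> x y = \<phi> (x i) * cnj (\<phi> (y i)) * ?P"
      unfolding v(1) outer_def using factor[rule_format, OF v(2)] x y by simp
    ultimately show ?thesis using N_pos unfolding tensor_def \<alpha>_def by (simp add: restr_def)
  qed
  ultimately show ?thesis by blast
qed

theorem theorem8p1:
  fixes a n k i :: nat and C :: "qvec set" and I :: "nat \<Rightarrow> nat set"
    and Rec :: "nat \<Rightarrow> qop \<Rightarrow> qop"
  assumes "0 < a"
    and "quantum_code a n k C" and "0 < k"
    and "i < n"
    and "I 1 \<subseteq> {..<n}" and "I 2 \<subseteq> {..<n}" and "I 1 \<inter> I 2 = {i}"
    and "\<forall>b\<in>{1,2}. quantum_channel a (I b - {i}) (I b) (Rec b)"
    and "\<forall>b\<in>{1,2}. \<forall>\<psi>\<in>code_states a n C. \<forall>x\<in>cfgs a {..<n}. \<forall>y\<in>cfgs a {..<n}.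
           channel_tensor_id (I b - {i}) (I b) ({..<n} - I b) (Rec b)
             (reduced a n ({..<n} - {i}) \<psi>) x y = \<psi> x y"
  shows "\<exists>\<alpha>. density a {i} \<alpha> \<and>
           (\<forall>\<psi>\<in>code_states a n C. \<forall>x\<in>cfgs a {..<n}. \<forall>y\<in>cfgs a {..<n}.
              \<psi> x y = tensor {i} ({..<n} - {i}) \<alpha> (reduced a n ({..<n} - {i}) \<psi>) x y)"
proof -
  have sub: "is_subspace a n C" using assms(2) unfolding quantum_code_def by blast
  have kraus: "\<exists>Ks. Rec b = kraus_apply a (I b - {i}) Ks" if "b \<in> {1, 2}" for b
    using assms(8) that unfolding quantum_channel_def by fast
  have recovers: "recovers_qudit a n C i (I b) (Rec b)" if "b \<in> {1, 2}" for b
    using assms(9) that unfolding recovers_qudit_def by blast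
  obtain Ks Ls where "recovers_qudit a n C i (I 1) (kraus_apply a (I 1 - {i}) Ks)"
      and "recovers_qudit a n C i (I 2) (kraus_apply a (I 2 - {i}) Ls)"
    using kraus[of 1] kraus[of 2] recovers[of 1] recovers[of 2] by auto
  then obtain \<phi> z0 w0 where "z0 < a" "w0 < a" "\<phi> w0 \<noteq> 0"
      and "\<forall>v\<in>C. \<forall>x\<in>cfgs a {..<n}. v x = \<phi> (x i) * v (x(i := z0))"
    using code_vectors_factor_at_shared_qudit[OF assms(1) sub assms(7,5,6)] by blast
  then show ?thesis by (rule product_state_of_factorization[OF assms(4)])
qed

end
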